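(* Let $R=\mathbb{F}_q+v\mathbb{F}_q+v^2\mathbb{F}_q$ with $v^3=v$, let $M$ be an $(n-1)\times(n-1)$ circulant matrix over $R$, and let $\alpha,\omega\in R$. Then the matrix $$G=\left(I_n\ \middle|\ \begin{array}{cccc}\alpha&\omega&\cdots&\omega\\ \omega&&&\\ \vdots&&M&\\ \omega&&&\end{array}\right)$$ is a generator matrix of a formally self-dual code over $R$.
   Context: $q$ is a prime power and $R=\mathbb{F}_q[v]/\langle v^3-v\rangle$. A circulant matrix is one in which each row is the cyclic shift one position to the right of the previous row. A linear code of length $N$ over $R$ is an $R$-submodule of $R^N$; $C^\perp=\{x\in R^N:\sum x_iy_i=0\ \forall y\in C\}$. For $c\in R^N$ written uniquely as $a_0+va_1+v^2a_2$ with $a_i\in\mathbb{F}_q^N$, the Gray map is $\Psi(c)=(a_0,a_0+a_2,a_1)$ and the Lee weight $w_L(c)$ is the Hamming weight of $\Psi(c)$. $C$ is formally self-dual if $C$ and $C^\perp$ have the same Lee weight enumerator $\sum_c X^{3N-w_L(c)}Y^{w_L(c)}$. *)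

theory Defs
  imports Main
begin

text \<open>The ring R = F[v]/(v^3 - v): the element R3 a0 a1 a2 stands for a0 + v a1 + v^2 a2.\<close>

datatype 'a R3 = R3 (c0: 'a) (c1: 'a) (c2: 'a)

instantiation R3 :: (field) comm_ring_1
begin

definition zero_R3 :: "'a R3" where "zero_R3 = R3 0 0 0"
definition one_R3 :: "'a R3" where "one_R3 = R3 1 0 0"
definition plus_R3 :: "'a R3 \<Rightarrow> 'a R3 \<Rightarrow> 'a R3" where
  "plus_R3 x y = R3 (c0 x + c0 y) (c1 x + c1 y) (c2 x + c2 y)"
definition minus_R3 :: "'a R3 \<Rightarrow> 'a R3 \<Rightarrow> 'a R3" where
  "minus_R3 x y = R3 (c0 x - c0 y) (c1 x - c1 y) (c2 x - c2 y)"
definition uminus_R3 :: "'a R3 \<Rightarrow> 'a R3" where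
  "uminus_R3 x = R3 (- c0 x) (- c1 x) (- c2 x)"
text \<open>Multiplication using v^3 = v (hence v^4 = v^2).\<close>
definition times_R3 :: "'a R3 \<Rightarrow> 'a R3 \<Rightarrow> 'a R3" where
  "times_R3 x y = R3 (c0 x * c0 y)
     (c0 x * c1 y + c1 x * c0 y + c1 x * c2 y + c2 x * c1 y)
     (c0 x * c2 y + c2 x * c0 y + c1 x * c1 y + c2 x * c2 y)"

instance
  by standard (auto simp: zero_R3_def one_R3_def plus_R3_def minus_R3_def uminus_R3_def
      times_R3_def algebra_simps intro!: R3.expand)

end

definition vecs :: "nat \<Rightarrow> (nat \<Rightarrow> 'a::field R3) set" where
  "vecs N = {c. \<forall>i\<ge>N. c i = 0}"

definition is_linear_code :: "nat \<Rightarrow> (nat \<Rightarrow> 'a::field R3) set \<Rightarrow> bool" where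
  "is_linear_code N C \<longleftrightarrow> C \<subseteq> vecs N \<and> (\<lambda>_. 0) \<in> C \<and>
     (\<forall>x\<in>C. \<forall>y\<in>C. (\<lambda>i. x i + y i) \<in> C) \<and>
     (\<forall>r. \<forall>x\<in>C. (\<lambda>i. r * x i) \<in> C)"

definition dual_code :: "nat \<Rightarrow> (nat \<Rightarrow> 'a::field R3) set \<Rightarrow> (nat \<Rightarrow> 'a R3) set" where
  "dual_code N C = {x \<in> vecs N. \<forall>y\<in>C. (\<Sum>i<N. x i * y i) = 0}"

definition gray :: "nat \<Rightarrow> (nat \<Rightarrow> 'a::field R3) \<Rightarrow> nat \<Rightarrow> 'a" where
  "gray N c k = (if k < N then c0 (c k)
                 else if k < 2*N then c0 (c (k - N)) + c2 (c (k - N))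
                 else if k < 3*N then c1 (c (k - 2*N)) else 0)"

definition lee_weight :: "nat \<Rightarrow> (nat \<Rightarrow> 'a::field R3) \<Rightarrow> nat" where
  "lee_weight N c = card {k. k < 3*N \<and> gray N c k \<noteq> 0}"

text \<open>Lee weight enumerator, represented by its coefficient sequence:
  w \<mapsto> number of codewords of Lee weight w (coefficient of X^(3N-w) Y^w).\<close>
definition lee_weight_enum :: "nat \<Rightarrow> (nat \<Rightarrow> 'a::field R3) set \<Rightarrow> nat \<Rightarrow> nat" where
  "lee_weight_enum N C w = card {c\<in>C. lee_weight N c = w}"

definition formally_self_dual :: "nat \<Rightarrow> (nat \<Rightarrow> 'a::field R3) set \<Rightarrow> bool" where
  "formally_self_dual N C \<longleftrightarrow> lee_weight_enum N C = lee_weight_enum N (dual_code N C)"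

definition row_span :: "nat \<Rightarrow> nat \<Rightarrow> (nat \<Rightarrow> nat \<Rightarrow> 'a::field R3) \<Rightarrow> (nat \<Rightarrow> 'a R3) set" where
  "row_span k N G = {c. \<exists>x. c = (\<lambda>j. if j < N then (\<Sum>i<k. x i * G i j) else 0)}"

definition circulant :: "nat \<Rightarrow> (nat \<Rightarrow> nat \<Rightarrow> 'b) \<Rightarrow> bool" where
  "circulant m M \<longleftrightarrow> (\<forall>i<m. \<forall>j<m. M i j = M 0 ((j + m - i) mod m))"

definition gen_matrix :: "nat \<Rightarrow> 'a::field R3 \<Rightarrow> 'a R3 \<Rightarrow> (nat \<Rightarrow> nat \<Rightarrow> 'a R3) \<Rightarrow> nat \<Rightarrow> nat \<Rightarrow> 'a R3" where
  "gen_matrix n \<alpha> \<omega> M i j =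
     (if j < n then (if i = j then 1 else 0)
      else (let k = j - n in
            if i = 0 \<and> k = 0 then \<alpha>
            else if i = 0 \<or> k = 0 then \<omega>
            else M (i - 1) (k - 1)))"

end

theory Submission
  imports Defs
begin

text \<open>With the identity block in front, the code is C = {(x, xA)} and its dual is
  {(-Ay, y)}. A circulant matrix is persymmetric, so for the reflection
  p(i) = -i mod n of the indices the block A satisfies A i k = A (p k) (p i). Hence
  (x, y) \<mapsto> (-y \<circ> p, x \<circ> p) maps C onto its dual. This map only permutes and negates
  coordinates, and the Lee weight is a sum of coordinate weights that are invariant under
  negation, so it matches codewords of C and of its dual of equal Lee weight.\<close>

lemma sum_lessThan_add:
  fixes f :: "nat \<Rightarrow> 'b::comm_monoid_add"
  shows "(\<Sum>j<n + m. f j) = (\<Sum>j<n. f j) + (\<Sum>k<m. f (n + k))"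
  by (induction m) (simp_all add: add.assoc)

lemma card_lessThan_filter: "card {k. k < (m::nat) \<and> P k} = (\<Sum>k<m. if P k then 1 else 0)"
proof -
  have "{k. k < m \<and> P k} = {k\<in>{..<m}. P k}" by auto
  then show ?thesis by (simp add: sum.inter_filter[symmetric])
qed

definition lee_weight_R3 :: "'a::field R3 \<Rightarrow> nat" where
  "lee_weight_R3 r = (if c0 r \<noteq> 0 then 1 else 0) + (if c0 r + c2 r \<noteq> 0 then 1 else 0)
     + (if c1 r \<noteq> 0 then 1 else 0)"

lemma lee_weight_R3_uminus [simp]: "lee_weight_R3 (- r) = lee_weight_R3 r"
proof -
  have "- c0 r + - c2 r = - (c0 r + c2 r)" by simp
  then show ?thesis by (simp add: lee_weight_R3_def uminus_R3_def neg_eq_iff_add_eq_0)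
qed

lemma lee_weight_eq_sum: "lee_weight N c = (\<Sum>i<N. lee_weight_R3 (c i))"
proof -
  let ?f = "\<lambda>k. if gray N c k \<noteq> 0 then (1::nat) else 0"
  have "lee_weight N c = (\<Sum>k<N + (N + N). ?f k)"
    unfolding lee_weight_def card_lessThan_filter by (simp add: numeral_3_eq_3)
  also have "\<dots> = (\<Sum>k<N. ?f k) + ((\<Sum>k<N. ?f (N + k)) + (\<Sum>k<N. ?f (N + (N + k))))"
    by (simp add: sum_lessThan_add)
  also have "(\<Sum>k<N. ?f k) = (\<Sum>k<N. if c0 (c k) \<noteq> 0 then 1 else 0)"
    by (rule sum.cong) (auto simp: gray_def)
  also have "(\<Sum>k<N. ?f (N + k)) = (\<Sum>k<N. if c0 (c k) + c2 (c k) \<noteq> 0 then 1 else 0)"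
    by (rule sum.cong) (auto simp: gray_def)
  also have "(\<Sum>k<N. ?f (N + (N + k))) = (\<Sum>k<N. if c1 (c k) \<noteq> 0 then 1 else 0)"
    by (rule sum.cong) (auto simp: gray_def)
  finally show ?thesis by (simp add: lee_weight_R3_def sum.distrib add.assoc)
qed

lemma lee_weight_signed_permute:
  assumes \<sigma>: "bij_betw \<sigma> {..<N} {..<N}"
    and signed: "\<And>i. i < N \<Longrightarrow> d i = c (\<sigma> i) \<or> d i = - c (\<sigma> i)"
  shows "lee_weight N d = lee_weight N c"
proof -
  have "lee_weight N d = (\<Sum>i<N. lee_weight_R3 (c (\<sigma> i)))"
    unfolding lee_weight_eq_sum
    by (intro sum.cong refl) (metis lee_weight_R3_uminus lessThan_iff signed)
  also have "\<dots> = lee_weight N c"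
    unfolding lee_weight_eq_sum by (rule sum.reindex_bij_betw[OF \<sigma>])
  finally show ?thesis .
qed

lemma lee_weight_enum_eq_if_bij:
  assumes f: "bij_betw f C D" and weight: "\<And>c. c \<in> C \<Longrightarrow> lee_weight N (f c) = lee_weight N c"
  shows "lee_weight_enum N C = lee_weight_enum N D"
proof
  fix w
  have "f ` {c\<in>C. lee_weight N c = w} = {d\<in>D. lee_weight N d = w}"
    using bij_betw_imp_surj_on[OF f] weight by force
  then have "bij_betw f {c\<in>C. lee_weight N c = w} {d\<in>D. lee_weight N d = w}"
    by (intro bij_betw_subset[OF f]) auto
  then show "lee_weight_enum N C w = lee_weight_enum N D w"
    unfolding lee_weight_enum_def by (rule bij_betw_same_card)
qed

definition swap_reflect :: "nat \<Rightarrow> (nat \<Rightarrow> nat) \<Rightarrow> (nat \<Rightarrow> 'a::field R3) \<Rightarrow> nat \<Rightarrow> 'a R3" where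
  "swap_reflect n p c i =
     (if i < n then - c (n + p i) else if i < 2*n then c (p (i - n)) else 0)"

lemma swap_reflect_uminus: "swap_reflect n p (\<lambda>i. - c i) = (\<lambda>i. - swap_reflect n p c i)"
  by (auto simp: swap_reflect_def)

context
  fixes n :: nat and p :: "nat \<Rightarrow> nat"
  assumes p_range: "\<And>i. i < n \<Longrightarrow> p i < n"
    and p_involution: "\<And>i. i < n \<Longrightarrow> p (p i) = i"
begin

lemma sum_reindex_involution: "(\<Sum>i<n. g (p i)) = (\<Sum>i<n. g i)"
  by (rule sum.reindex_bij_witness[where i=p and j=p]) (auto simp: p_range p_involution)

lemma swap_reflect_swap_reflect:
  "c \<in> vecs (2*n) \<Longrightarrow> swap_reflect n p (swap_reflect n p c) = (\<lambda>i. - c i)"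
  by (auto simp: swap_reflect_def vecs_def fun_eq_iff p_range p_involution)

lemma lee_weight_swap_reflect: "lee_weight (2*n) (swap_reflect n p c) = lee_weight (2*n) c"
proof (rule lee_weight_signed_permute)
  define \<sigma> where "\<sigma> i = (if i < n then n + p i else p (i - n))" for i
  have \<sigma>_range: "\<sigma> i < 2*n" and \<sigma>_involution: "\<sigma> (\<sigma> i) = i" if "i < 2*n" for i
  proof -
    have "i - n < n" if "\<not> i < n" using that \<open>i < 2*n\<close> by simp
    then show "\<sigma> i < 2*n" "\<sigma> (\<sigma> i) = i"
      using p_range[of i] p_range[of "i - n"] p_involution[of i] p_involution[of "i - n"]
      by (auto simp: \<sigma>_def)
  qed
  show "bij_betw \<sigma> {..<2*n} {..<2*n}"
    by (rule bij_betw_byWitness[where f'=\<sigma>]) (auto simp: \<sigma>_range \<sigma>_involution)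
  show "swap_reflect n p c i = c (\<sigma> i) \<or> swap_reflect n p c i = - c (\<sigma> i)" if "i < 2*n" for i
    using that by (simp add: swap_reflect_def \<sigma>_def)
qed

end

lemma is_linear_code_row_span: "is_linear_code N (row_span k N G)"
  unfolding is_linear_code_def
proof (intro conjI ballI allI)
  show "row_span k N G \<subseteq> vecs N" by (auto simp: row_span_def vecs_def)
  show "(\<lambda>_. 0) \<in> row_span k N G"
    unfolding row_span_def by (auto intro!: exI[of _ "\<lambda>_. 0"])
next
  fix c d assume "c \<in> row_span k N G" "d \<in> row_span k N G"
  then obtain x y where "c = (\<lambda>j. if j < N then \<Sum>i<k. x i * G i j else 0)"
    and "d = (\<lambda>j. if j < N then \<Sum>i<k. y i * G i j else 0)"
    unfolding row_span_def by blast
  then show "(\<lambda>j. c j + d j) \<in> row_span k N G"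
    unfolding row_span_def
    by (auto intro!: exI[of _ "\<lambda>i. x i + y i"] simp: sum.distrib distrib_right)
next
  fix r c assume "c \<in> row_span k N G"
  then obtain x where "c = (\<lambda>j. if j < N then \<Sum>i<k. x i * G i j else 0)"
    unfolding row_span_def by blast
  then show "(\<lambda>j. r * c j) \<in> row_span k N G"
    unfolding row_span_def
    by (auto intro!: exI[of _ "\<lambda>i. r * x i"] simp: sum_distrib_left mult.assoc)
qed

context
  fixes n :: nat and G :: "nat \<Rightarrow> nat \<Rightarrow> 'a::field R3"
  assumes identity_block: "\<And>i j. i < n \<Longrightarrow> j < n \<Longrightarrow> G i j = (if i = j then 1 else 0)"
begin

lemma sum_times_identity_block: "j < n \<Longrightarrow> (\<Sum>i<n. x i * G i j) = x j"
  by (simp add: identity_block if_distrib cong: if_cong)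

lemma row_span_systematic_iff:
  "c \<in> row_span n (2*n) G \<longleftrightarrow>
     c \<in> vecs (2*n) \<and> (\<forall>k<n. c (n + k) = (\<Sum>i<n. c i * G i (n + k)))"
proof
  assume "c \<in> row_span n (2*n) G"
  then obtain x where x: "c = (\<lambda>j. if j < 2*n then \<Sum>i<n. x i * G i j else 0)"
    unfolding row_span_def by blast
  then have "c j = x j" if "j < n" for j
    using that by (simp add: sum_times_identity_block)
  then show "c \<in> vecs (2*n) \<and> (\<forall>k<n. c (n + k) = (\<Sum>i<n. c i * G i (n + k)))"
    using x by (auto simp: vecs_def)
next
  assume c: "c \<in> vecs (2*n) \<and> (\<forall>k<n. c (n + k) = (\<Sum>i<n. c i * G i (n + k)))"
  have "c j = (if j < 2*n then \<Sum>i<n. c i * G i j else 0)" for j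
  proof -
    consider "j < n" | k where "k < n" "j = n + k" | "2*n \<le> j"
      by (metis add_diff_inverse_nat mult_2 nat_add_left_cancel_less not_less)
    then show ?thesis
      by cases (use c in \<open>auto simp: sum_times_identity_block vecs_def\<close>)
  qed
  then show "c \<in> row_span n (2*n) G"
    unfolding row_span_def by blast
qed

lemma inner_product_codeword:
  assumes "y \<in> row_span n (2*n) G"
  shows "(\<Sum>j<2*n. z j * y j) = (\<Sum>i<n. y i * (z i + (\<Sum>k<n. G i (n + k) * z (n + k))))"
proof -
  have right_half: "y (n + k) = (\<Sum>i<n. y i * G i (n + k))" if "k < n" for k
    using assms that by (simp add: row_span_systematic_iff)
  have "(\<Sum>j<2*n. z j * y j) = (\<Sum>i<n. z i * y i) + (\<Sum>k<n. z (n + k) * y (n + k))"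
    by (simp add: mult_2 sum_lessThan_add)
  also have "(\<Sum>k<n. z (n + k) * y (n + k)) = (\<Sum>k<n. \<Sum>i<n. z (n + k) * (y i * G i (n + k)))"
    by (simp add: right_half sum_distrib_left)
  also have "\<dots> = (\<Sum>i<n. y i * (\<Sum>k<n. G i (n + k) * z (n + k)))"
    by (subst sum.swap) (simp add: sum_distrib_left mult_ac)
  finally show ?thesis
    by (simp add: distrib_left sum.distrib mult.commute)
qed

lemma dual_code_systematic_iff:
  "z \<in> dual_code (2*n) (row_span n (2*n) G) \<longleftrightarrow>
     z \<in> vecs (2*n) \<and> (\<forall>i<n. z i = - (\<Sum>k<n. G i (n + k) * z (n + k)))"
proof -
  define s where "s i = z i + (\<Sum>k<n. G i (n + k) * z (n + k))" for i
  have "(\<forall>y\<in>row_span n (2*n) G. (\<Sum>j<2*n. z j * y j) = 0) \<longleftrightarrow> (\<forall>i<n. s i = 0)"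
  proof
    assume orth: "\<forall>y\<in>row_span n (2*n) G. (\<Sum>j<2*n. z j * y j) = 0"
    show "\<forall>i<n. s i = 0"
    proof (intro allI impI)
      fix i assume i: "i < n"
      define row where "row j = (if j < 2*n then G i j else 0)" for j
      have "row \<in> row_span n (2*n) G"
        unfolding row_span_def
        by (auto simp: row_def fun_eq_iff if_distrib[of "\<lambda>b. b * _"] i cong: if_cong
            intro!: exI[of _ "\<lambda>l. if l = i then 1 else 0"])
      then have "(\<Sum>l<n. row l * s l) = 0"
        using orth by (simp add: inner_product_codeword s_def)
      moreover have "(\<Sum>l<n. row l * s l) = (\<Sum>l<n. if l = i then s l else 0)"
        using i by (intro sum.cong refl) (simp add: row_def identity_block)
      ultimately show "s i = 0" using i by simp
    qed
  qed (simp add: inner_product_codeword s_def)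
  then show ?thesis
    by (simp add: dual_code_def s_def eq_neg_iff_add_eq_0)
qed

context
  fixes p :: "nat \<Rightarrow> nat"
  assumes p_range: "\<And>i. i < n \<Longrightarrow> p i < n"
    and p_involution: "\<And>i. i < n \<Longrightarrow> p (p i) = i"
    and persymmetric: "\<And>i k. i < n \<Longrightarrow> k < n \<Longrightarrow> G i (n + k) = G (p k) (n + p i)"
begin

lemma swap_reflect_row_span_into_dual:
  assumes c: "c \<in> row_span n (2*n) G"
  shows "swap_reflect n p c \<in> dual_code (2*n) (row_span n (2*n) G)"
  unfolding dual_code_systematic_iff
proof (intro conjI allI impI)
  show "swap_reflect n p c \<in> vecs (2*n)" by (simp add: vecs_def swap_reflect_def)
  fix i assume i: "i < n"
  have "(\<Sum>k<n. G i (n + k) * swap_reflect n p c (n + k)) = (\<Sum>k<n. G i (n + k) * c (p k))"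
    by (intro sum.cong refl) (simp add: swap_reflect_def)
  also have "\<dots> = (\<Sum>j<n. G i (n + p j) * c j)"
    using sum_reindex_involution[OF p_range p_involution, of "\<lambda>j. G i (n + p j) * c j"]
    by (simp add: p_involution)
  also have "\<dots> = (\<Sum>j<n. c j * G j (n + p i))"
  proof (intro sum.cong refl)
    fix j assume "j \<in> {..<n}"
    then show "G i (n + p j) * c j = c j * G j (n + p i)"
      using persymmetric[OF i p_range, of j] p_involution[of j] by (simp add: mult.commute)
  qed
  also have "\<dots> = c (n + p i)"
    using c i p_range by (simp add: row_span_systematic_iff)
  finally show "swap_reflect n p c i = - (\<Sum>k<n. G i (n + k) * swap_reflect n p c (n + k))"
    using i by (simp add: swap_reflect_def)
qed

lemma swap_reflect_dual_into_row_span: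
  assumes d: "d \<in> dual_code (2*n) (row_span n (2*n) G)"
  shows "swap_reflect n p d \<in> row_span n (2*n) G"
  unfolding row_span_systematic_iff
proof (intro conjI allI impI)
  show "swap_reflect n p d \<in> vecs (2*n)" by (simp add: vecs_def swap_reflect_def)
  fix k assume k: "k < n"
  have "(\<Sum>i<n. swap_reflect n p d i * G i (n + k)) = - (\<Sum>i<n. d (n + p i) * G i (n + k))"
    by (simp add: swap_reflect_def sum_negf)
  also have "(\<Sum>i<n. d (n + p i) * G i (n + k)) = (\<Sum>j<n. d (n + j) * G (p j) (n + k))"
    using sum_reindex_involution[OF p_range p_involution, of "\<lambda>j. d (n + j) * G (p j) (n + k)"]
    by (simp add: p_involution)
  also have "\<dots> = (\<Sum>j<n. G (p k) (n + j) * d (n + j))"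
  proof (intro sum.cong refl)
    fix j assume "j \<in> {..<n}"
    then show "d (n + j) * G (p j) (n + k) = G (p k) (n + j) * d (n + j)"
      using persymmetric[OF p_range k, of j] p_involution[of j] by (simp add: mult.commute)
  qed
  also have "- \<dots> = d (p k)"
    using d k p_range by (simp add: dual_code_systematic_iff)
  finally show "swap_reflect n p d (n + k) = (\<Sum>i<n. swap_reflect n p d i * G i (n + k))"
    using k by (simp add: swap_reflect_def)
qed

lemma formally_self_dual_systematic: "formally_self_dual (2*n) (row_span n (2*n) G)"
  unfolding formally_self_dual_def
proof (rule lee_weight_enum_eq_if_bij)
  let ?C = "row_span n (2*n) G"
  have code_vecs: "x \<in> vecs (2*n)" if "x \<in> ?C" for x
    using that by (simp add: row_span_systematic_iff)
  have dual_vecs: "x \<in> vecs (2*n)" if "x \<in> dual_code (2*n) ?C" for x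
    using that by (simp add: dual_code_def)
  have uminus_closed: "(\<lambda>i. - x i) \<in> ?C" if "x \<in> ?C" for x
    using that by (simp add: row_span_systematic_iff vecs_def sum_negf)
  show "bij_betw (swap_reflect n p) ?C (dual_code (2*n) ?C)"
  proof (rule bij_betw_byWitness[where f'="\<lambda>d i. - swap_reflect n p d i"])
    show "\<forall>c\<in>?C. (\<lambda>i. - swap_reflect n p (swap_reflect n p c) i) = c"
      using code_vecs by (simp add: swap_reflect_swap_reflect[OF p_range p_involution])
    show "\<forall>d\<in>dual_code (2*n) ?C. swap_reflect n p (\<lambda>i. - swap_reflect n p d i) = d"
      using dual_vecs
      by (simp add: swap_reflect_uminus swap_reflect_swap_reflect[OF p_range p_involution])
    show "swap_reflect n p ` ?C \<subseteq> dual_code (2*n) ?C"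
      using swap_reflect_row_span_into_dual by blast
    show "(\<lambda>d i. - swap_reflect n p d i) ` dual_code (2*n) ?C \<subseteq> ?C"
      using swap_reflect_dual_into_row_span uminus_closed by blast
  qed
  show "lee_weight (2*n) (swap_reflect n p c) = lee_weight (2*n) c" for c
    by (rule lee_weight_swap_reflect[OF p_range p_involution])
qed

end

end

lemma circulant_persymmetric:
  assumes circ: "circulant m M" and "i < m" and "j < m"
  shows "M (m - 1 - j) (m - 1 - i) = M i j"
proof -
  have "m - 1 - j < m" "m - 1 - i < m" using assms(2) by auto
  then have "M (m - 1 - j) (m - 1 - i) = M 0 ((m - 1 - i + m - (m - 1 - j)) mod m)"
    by (rule circ[unfolded circulant_def, rule_format])
  also have "m - 1 - i + m - (m - 1 - j) = j + m - i"
    using assms(2,3) by linarith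
  also have "M 0 ((j + m - i) mod m) = M i j"
    using circ[unfolded circulant_def, rule_format, OF assms(2,3)] by simp
  finally show ?thesis .
qed

lemma gen_matrix_persymmetric:
  assumes "circulant (n - 1) M" and "i < n" and "k < n"
  shows "gen_matrix n \<alpha> \<omega> M i (n + k) = gen_matrix n \<alpha> \<omega> M ((n - k) mod n) (n + (n - i) mod n)"
proof (cases "i = 0 \<or> k = 0")
  case True
  then show ?thesis using assms by (auto simp: gen_matrix_def Let_def)
next
  case False
  then have "i - 1 < n - 1" "k - 1 < n - 1" using assms(2,3) by auto
  from circulant_persymmetric[OF assms(1) this]
  have "M (n - k - 1) (n - i - 1) = M (i - 1) (k - 1)"
    using False by (simp add: Suc_diff_Suc)
  moreover have "(n - k) mod n = n - k" "(n - i) mod n = n - i"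
    using False assms(2,3) by simp_all
  ultimately show ?thesis
    using False assms(2,3) by (auto simp: gen_matrix_def Let_def)
qed

theorem theorem17:
  fixes n :: nat and \<alpha> \<omega> :: "'a::{field,finite} R3"
    and M :: "nat \<Rightarrow> nat \<Rightarrow> 'a R3"
  assumes "circulant (n - 1) M"
  shows "is_linear_code (2*n) (row_span n (2*n) (gen_matrix n \<alpha> \<omega> M)) \<and>
         formally_self_dual (2*n) (row_span n (2*n) (gen_matrix n \<alpha> \<omega> M))"
proof
  show "is_linear_code (2*n) (row_span n (2*n) (gen_matrix n \<alpha> \<omega> M))"
    by (rule is_linear_code_row_span)
  let ?p = "\<lambda>i. (n - i) mod n"
  show "formally_self_dual (2*n) (row_span n (2*n) (gen_matrix n \<alpha> \<omega> M))"
  proof (rule formally_self_dual_systematic)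
    show "gen_matrix n \<alpha> \<omega> M i j = (if i = j then 1 else 0)" if "j < n" for i j
      using that by (simp add: gen_matrix_def)
    show "?p i < n" and "?p (?p i) = i" if "i < n" for i
      using that by (auto simp: mod_if)
    show "gen_matrix n \<alpha> \<omega> M i (n + k) = gen_matrix n \<alpha> \<omega> M (?p k) (n + ?p i)"
      if "i < n" and "k < n" for i k
      using gen_matrix_persymmetric[OF assms that] .
  qed
qed

end
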